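(* Let $p_1,p_2$ be relatively prime positive integers with $p_1>p_2+1$ and $p_2\ge2$. Write $p_1=ap_2+b$ with integers $a\ge1$ and $0<b<p_2$. Let $\ell\in\{0,\dots,p_1-p_2-1\}$, write $\ell=\nu p_2+\ell'$ with integers $\nu\ge0$ and $0\le\ell'<p_2$, and let $c\in\big[\frac{\ell}{p_1-p_2},\frac{\ell+1}{p_1-p_2}\big)$. Write the first $p_1+p_2$ terms of $S_c(p_1,p_2)$ as $1^{k_1},2,1^{k_2},2,\dots,1^{k_{p_2}},2,1^{k_{p_2+1}}$. Then: - $k_1=\nu+1$; - for $i=2,\dots,p_2$, $k_i=a+1$ if $i=\lceil (jp_2-\ell')/b\rceil+1$ for some $j\in\{1,\dots,b\}$, and $k_i=a$ otherwise; - $k_{p_2+1}=p_1-(k_1+\cdots+k_{p_2})$.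
   Context: Stationary divisor method with cut point $c\in[0,1]$ for votes $(p_1,p_2)$: seats are allocated one at a time. Initially $a_1=a_2=0$; each next seat goes to a party $i$ maximizing $p_i/(a_i+c)$, whose $a_i$ then increases by $1$. Ties are broken in favor of party $1$. For $c=0$ the convention is that $p_1/0>p_2/0$, and $p_i/0>p_j/k$ for $k>0$. $S_c(p_1,p_2)$ is the infinite sequence of party labels (in $\{1,2\}$) of successive seats. It is periodic with period $p_1+p_2$, and its first $p_1+p_2$ terms contain exactly $p_1$ ones and $p_2$ twos. The notation $1^k$ denotes $k$ consecutive $1$'s. *)

theory Defs
  imports Complex_Main
begin

text \<open>Stationary divisor method with cut point c for votes (p1,p2).\<close>

definition party1_wins :: "real \<Rightarrow> nat \<Rightarrow> nat \<Rightarrow> nat \<Rightarrow> nat \<Rightarrow> bool" where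
  "party1_wins c p1 p2 a1 a2 =
     (if real a1 + c = 0 then True
      else if real a2 + c = 0 then False
      else real p1 / (real a1 + c) \<ge> real p2 / (real a2 + c))"

primrec alloc :: "real \<Rightarrow> nat \<Rightarrow> nat \<Rightarrow> nat \<Rightarrow> nat \<times> nat" where
  "alloc c p1 p2 0 = (0, 0)"
| "alloc c p1 p2 (Suc n) =
     (let (a1, a2) = alloc c p1 p2 n in
      if party1_wins c p1 p2 a1 a2 then (Suc a1, a2) else (a1, Suc a2))"

text \<open>S_c(p1,p2): the label (1 or 2) of the seat number n (0-indexed).\<close>
definition S :: "real \<Rightarrow> nat \<Rightarrow> nat \<Rightarrow> nat \<Rightarrow> nat" where
  "S c p1 p2 n = (case alloc c p1 p2 n of (a1, a2) \<Rightarrow>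
      if party1_wins c p1 p2 a1 a2 then 1 else 2)"

end

theory Submission
  imports Defs
begin

(* For c in the window [l/(p1-p2), (l+1)/(p1-p2)), comparing p1/(a1+c) with p2/(a2+c) amounts
   to the integer inequality p2 a1 - p1 a2 <= floor (c (p1-p2)) = l.  So party 2 receives its
   m-th seat exactly when party 1 holds D m = floor ((p1 (m-1) + l) / p2) + 1 seats, and the
   sequence reads 1^(D 1 - D 0) 2 1^(D 2 - D 1) 2 ...  With p1 = a p2 + b and l = nu p2 + l',
   the block length D i - D (i-1) for i >= 2 is a plus the number of multiples of p2 in
   (b (i-2) + l', b (i-1) + l'].  Since b < p2 there is at most one, and j p2 lies in that
   interval iff i = ceil ((j p2 - l') / b) + 1. *)

locale threshold_allocation =
  fixes c :: real and p1 p2 :: nat and D :: "nat \<Rightarrow> nat"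
  assumes mono_D: "mono D"
    and D_0: "D 0 = 0"
    and party1_wins_iff: "party1_wins c p1 p2 x y \<longleftrightarrow> x < D (Suc y)"
begin

lemma alloc_bounds: "alloc c p1 p2 n = (x, y) \<Longrightarrow> x + y = n \<and> D y \<le> x \<and> x \<le> D (Suc y)"
proof (induction n arbitrary: x y)
  case 0
  then show ?case by (simp add: D_0)
next
  case (Suc n)
  obtain u v where uv: "alloc c p1 p2 n = (u, v)" by fastforce
  with Suc.IH have "u + v = n" "D v \<le> u" "u \<le> D (Suc v)" by auto
  moreover have "D (Suc v) \<le> D (Suc (Suc v))" using mono_D by (simp add: monoD)
  ultimately show ?case using Suc.prems uv party1_wins_iff[of u v] by (auto split: if_splits)
qed

lemma alloc_eq:
  assumes "D m + m \<le> n" "n \<le> D (Suc m) + m"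
  shows "alloc c p1 p2 n = (n - m, m)"
proof -
  obtain x y where xy: "alloc c p1 p2 n = (x, y)" by fastforce
  with alloc_bounds have x: "x + y = n" "D y \<le> x" "x \<le> D (Suc y)" by auto
  have "y = m"
  proof (rule ccontr)
    assume "y \<noteq> m"
    then consider "Suc y \<le> m" | "Suc m \<le> y" by linarith
    then show False
    proof cases
      case 1
      then have "D (Suc y) \<le> D m" using mono_D by (simp add: monoD)
      then show False using x assms 1 by linarith
    next
      case 2
      then have "D (Suc m) \<le> D y" using mono_D by (simp add: monoD)
      then show False using x assms 2 by linarith
    qed
  qed
  with xy x show ?thesis by auto
qed

lemma S_eq:
  assumes "D m + m \<le> n" "n \<le> D (Suc m) + m"
  shows "S c p1 p2 n = (if n < D (Suc m) + m then 1 else 2)"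
  using alloc_eq[OF assms] assms by (auto simp: S_def party1_wins_iff)

lemma map_S_ones:
  assumes "D m \<le> N" "N \<le> D (Suc m)"
  shows "map (S c p1 p2) [D m + m..<N + m] = replicate (N - D m) 1"
proof -
  have "S c p1 p2 n = 1" if "n \<in> set [D m + m..<N + m]" for n
    using that assms S_eq[of m n] by auto
  then have "replicate (length (map (S c p1 p2) [D m + m..<N + m])) 1 =
      map (S c p1 p2) [D m + m..<N + m]"
    by (intro replicate_length_same) auto
  then show ?thesis by simp
qed

lemma map_S_block:
  "map (S c p1 p2) [D m + m..<D (Suc m) + Suc m] = replicate (D (Suc m) - D m) 1 @ [2]"
proof -
  have "D m \<le> D (Suc m)" using mono_D by (simp add: monoD)
  then show ?thesis using map_S_ones[of m "D (Suc m)"] S_eq[of m "D (Suc m) + m"] by simp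
qed

lemma map_S_blocks:
  "map (S c p1 p2) [0..<D M + M] = concat (map (\<lambda>i. replicate (D i - D (i - 1)) 1 @ [2]) [1..<M + 1])"
proof (induction M)
  case 0
  then show ?case by (simp add: D_0)
next
  case (Suc M)
  have "D M + M \<le> D (Suc M) + Suc M" using mono_D by (simp add: monoD le_SucI)
  then have "[0..<D (Suc M) + Suc M] = [0..<D M + M] @ [D M + M..<D (Suc M) + Suc M]"
    by (metis le_add_diff_inverse upt_add_eq_append zero_le)
  then show ?case using Suc map_S_block[of M] by simp
qed

lemma map_S_prefix:
  assumes "D M \<le> N" "N \<le> D (Suc M)"
    and "\<And>i. i \<in> {1..M} \<Longrightarrow> k i = D i - D (i - 1)" and "k (Suc M) = N - D M"
  shows "map (S c p1 p2) [0..<N + M] =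
    concat (map (\<lambda>i. replicate (k i) 1 @ [2]) [1..<M + 1]) @ replicate (k (Suc M)) 1"
proof -
  have "[0..<N + M] = [0..<D M + M] @ [D M + M..<N + M]"
    using assms(1) by (metis add_le_mono1 le_add_diff_inverse upt_add_eq_append zero_le)
  then have "map (S c p1 p2) [0..<N + M] =
      concat (map (\<lambda>i. replicate (D i - D (i - 1)) 1 @ [2]) [1..<M + 1]) @ replicate (N - D M) 1"
    using map_S_blocks map_S_ones[OF assms(1,2)] by simp
  also have "map (\<lambda>i. replicate (D i - D (i - 1)) 1 @ [2]) [1..<M + 1] =
      map (\<lambda>i. replicate (k i) 1 @ [2::nat]) [1..<M + 1]"
    using assms(3) by (intro map_cong) auto
  finally show ?thesis using assms(4) by simp
qed

lemma sum_block_lengths: "(\<Sum>i=1..M. D i - D (i - 1)) = D M"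
proof (induction M)
  case 0
  then show ?case by (simp add: D_0)
next
  case (Suc M)
  have "D M \<le> D (Suc M)" using mono_D by (simp add: monoD)
  with Suc show ?case by simp
qed

end

fun party1_seats_before :: "nat \<Rightarrow> nat \<Rightarrow> nat \<Rightarrow> nat \<Rightarrow> nat" where
  "party1_seats_before p1 p2 l 0 = 0"
| "party1_seats_before p1 p2 l (Suc m) = (p1 * m + l) div p2 + 1"

lemma mono_party1_seats_before: "mono (party1_seats_before p1 p2 l)"
proof (rule mono_iff_le_Suc[THEN iffD2], intro allI)
  fix m
  show "party1_seats_before p1 p2 l m \<le> party1_seats_before p1 p2 l (Suc m)"
    by (cases m) (simp_all add: div_le_mono)
qed

lemma cross_le_iff_less_party1_seats_before:
  assumes "0 < p2"
  shows "p2 * x \<le> p1 * y + l \<longleftrightarrow> x < party1_seats_before p1 p2 l (Suc y)"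
  using assms by (simp add: less_Suc_eq_le less_eq_div_iff_mult_less_eq mult.commute)

lemma party1_wins_iff_cross_le:
  fixes p1 p2 l a1 a2 :: nat and c :: real
  assumes "0 < p2" "p2 < p1"
    and "real l / real (p1 - p2) \<le> c" "c < (real l + 1) / real (p1 - p2)"
  shows "party1_wins c p1 p2 a1 a2 \<longleftrightarrow> p2 * a1 \<le> p1 * a2 + l"
proof -
  have d: "0 < real p1 - real p2" "real (p1 - p2) = real p1 - real p2" using assms(2) by auto
  then have window: "real l \<le> c * (real p1 - real p2)" "c * (real p1 - real p2) < real l + 1"
    using assms(3,4) by (simp_all add: divide_le_eq less_divide_eq)
  have "0 \<le> c" using assms(3) order_trans[of 0 "real l / real (p1 - p2)" c] by simp
  have "party1_wins c p1 p2 a1 a2 \<longleftrightarrow> real p2 * (real a1 + c) \<le> real p1 * (real a2 + c)"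
  proof (cases "real a1 + c = 0 \<or> real a2 + c = 0")
    case True
    then have "c = 0" using \<open>0 \<le> c\<close> by auto
    then show ?thesis using True assms(1) by (auto simp: party1_wins_def mult_le_0_iff)
  next
    case False
    then have "0 < real a1 + c" "0 < real a2 + c" using \<open>0 \<le> c\<close> by auto
    then show ?thesis using False by (simp add: party1_wins_def field_simps)
  qed
  also have "\<dots> \<longleftrightarrow> of_int (int (p2 * a1) - int (p1 * a2)) \<le> c * (real p1 - real p2)"
    by (simp add: algebra_simps)
  also have "\<dots> \<longleftrightarrow> int (p2 * a1) - int (p1 * a2) \<le> \<lfloor>c * (real p1 - real p2)\<rfloor>"
    by (simp only: le_floor_iff)
  also have "\<lfloor>c * (real p1 - real p2)\<rfloor> = int l"
    using window by (simp add: floor_eq_iff)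
  finally show ?thesis by linarith
qed

lemma threshold_allocation_party1_seats_before:
  assumes "0 < p2" "p2 < p1"
    and "real l / real (p1 - p2) \<le> c" "c < (real l + 1) / real (p1 - p2)"
  shows "threshold_allocation c p1 p2 (party1_seats_before p1 p2 l)"
  using assms party1_wins_iff_cross_le cross_le_iff_less_party1_seats_before
  by unfold_locales (simp_all add: mono_party1_seats_before)

lemma party1_seats_before_bracket:
  assumes "0 < p2" "l < p1"
  shows "party1_seats_before p1 p2 l p2 \<le> p1" "p1 \<le> party1_seats_before p1 p2 l (Suc p2)"
proof -
  obtain q where q: "p2 = Suc q" using assms(1) by (cases p2) auto
  have "p1 * q + l < p1 * p2" using q assms(2) by simp
  then show "party1_seats_before p1 p2 l p2 \<le> p1"
    using q by (simp add: div_less_iff_less_mult mult.commute Suc_le_eq)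
  show "p1 \<le> party1_seats_before p1 p2 l (Suc p2)"
    using assms(1) by (simp add: less_eq_div_iff_mult_less_eq le_SucI)
qed

lemma party1_seats_before_Suc_eq:
  assumes "p1 = a * p2 + b" "l = \<nu> * p2 + l'" "0 < p2"
  shows "party1_seats_before p1 p2 l (Suc m) = a * m + \<nu> + (b * m + l') div p2 + 1"
proof -
  have "p1 * m + l = (b * m + l') + (a * m + \<nu>) * p2"
    using assms(1,2) by (simp add: algebra_simps)
  then show ?thesis using assms(3) by simp
qed

lemma div_add_le_Suc_div:
  fixes Y b d :: nat
  assumes "b \<le> d"
  shows "(Y + b) div d \<le> Suc (Y div d)"
proof (cases "d = 0")
  case False
  have "(Y + b) div d \<le> (Y + d) div d" using assms by (simp add: div_le_mono)
  then show ?thesis using False by simp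
qed simp

lemma div_less_div_iff_ex_mult:
  fixes Y Z d :: nat
  assumes "0 < d"
  shows "Y div d < Z div d \<longleftrightarrow> (\<exists>j. Y < j * d \<and> j * d \<le> Z)"
  using assms by (metis div_less_iff_less_mult div_times_less_eq_dividend
      less_eq_div_iff_mult_less_eq order_less_le_trans)

lemma ceiling_diff_divide_eq_iff:
  fixes m r n b :: nat
  assumes "0 < b"
  shows "\<lceil>(real m - real r) / real b\<rceil> = int n + 1 \<longleftrightarrow> b * n + r < m \<and> m \<le> b * (n + 1) + r"
proof -
  have "\<lceil>(real m - real r) / real b\<rceil> = int n + 1 \<longleftrightarrow>
      real n * real b < real m - real r \<and> real m - real r \<le> (real n + 1) * real b"
    using assms by (simp add: ceiling_eq_iff less_divide_eq divide_le_eq)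
  also have "\<dots> \<longleftrightarrow> real (b * n + r) < real m \<and> real m \<le> real (b * (n + 1) + r)"
    by (simp add: algebra_simps)
  finally show ?thesis by (simp only: of_nat_less_iff of_nat_le_iff)
qed

lemma party1_seats_before_step:
  assumes "p1 = a * p2 + b" "0 < b" "b < p2" "l = \<nu> * p2 + l'" "l' < p2" "2 \<le> i" "i \<le> p2"
  shows "party1_seats_before p1 p2 l i - party1_seats_before p1 p2 l (i - 1) =
    (if \<exists>j\<in>{1..b}. int i = \<lceil>(real (j * p2) - real l') / real b\<rceil> + 1 then a + 1 else a)"
proof -
  obtain n where i: "i = Suc (Suc n)" using assms(6) by (metis add_2_eq_Suc le_Suc_ex)
  define Y where "Y = b * n + l'"
  have p2: "0 < p2" using assms(2,3) by simp
  have "b * Suc n + l' = Y + b" by (simp add: Y_def)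
  then have seats: "party1_seats_before p1 p2 l i = a * Suc n + \<nu> + (Y + b) div p2 + 1"
    "party1_seats_before p1 p2 l (i - 1) = a * n + \<nu> + Y div p2 + 1"
    using party1_seats_before_Suc_eq[OF assms(1,4) p2, of "Suc n"]
      party1_seats_before_Suc_eq[OF assms(1,4) p2, of n]
    by (simp_all only: i diff_Suc_1 Y_def)
  have "Y + b = b * (n + 1) + l'" by (simp add: Y_def)
  also have "\<dots> \<le> b * (p2 - 1) + l'" using assms(7) i by (intro add_right_mono mult_le_mono2) simp
  also have "\<dots> < b * (p2 - 1) + p2" using assms(5) by simp
  also have "\<dots> \<le> (b + 1) * p2" by (simp add: algebra_simps)
  finally have Yb: "Y + b < (b + 1) * p2" .
  have jump_at: "int i = \<lceil>(real (j * p2) - real l') / real b\<rceil> + 1 \<longleftrightarrow> Y < j * p2 \<and> j * p2 \<le> Y + b"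
    for j
  proof -
    have "int i = \<lceil>(real (j * p2) - real l') / real b\<rceil> + 1 \<longleftrightarrow>
        \<lceil>(real (j * p2) - real l') / real b\<rceil> = int n + 1"
      using i by linarith
    then show ?thesis unfolding ceiling_diff_divide_eq_iff[OF assms(2)] by (simp add: Y_def add_ac)
  qed
  have "(\<exists>j\<in>{1..b}. int i = \<lceil>(real (j * p2) - real l') / real b\<rceil> + 1) \<longleftrightarrow>
      (\<exists>j\<in>{1..b}. Y < j * p2 \<and> j * p2 \<le> Y + b)"
    unfolding jump_at ..
  also have "\<dots> \<longleftrightarrow> (\<exists>j. Y < j * p2 \<and> j * p2 \<le> Y + b)"
  proof -
    have "j \<in> {1..b}" if "Y < j * p2" "j * p2 \<le> Y + b" for j
    proof -
      have "j * p2 < (b + 1) * p2" using that Yb by linarith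
      then have "j \<le> b" by (metis Suc_eq_plus1 less_Suc_eq_le mult_less_cancel2)
      moreover have "j \<noteq> 0" using that by (cases j) simp_all
      ultimately show ?thesis by simp
    qed
    then show ?thesis by blast
  qed
  also have "\<dots> \<longleftrightarrow> Y div p2 < (Y + b) div p2"
    using div_less_div_iff_ex_mult assms(2,3) by simp
  finally have jump: "(\<exists>j\<in>{1..b}. int i = \<lceil>(real (j * p2) - real l') / real b\<rceil> + 1) \<longleftrightarrow>
      Y div p2 < (Y + b) div p2" .
  have "Y div p2 \<le> (Y + b) div p2" "(Y + b) div p2 \<le> Suc (Y div p2)"
    using div_le_mono div_add_le_Suc_div assms(3) by simp_all
  then show ?thesis unfolding jump seats by auto
qed

theorem mainTheorem11:
  fixes p1 p2 a b l \<nu> l' :: nat and c :: real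
  assumes "coprime p1 p2" and "p2 \<ge> 2" and "p1 > p2 + 1"
    and "p1 = a * p2 + b" and "a \<ge> 1" and "0 < b" and "b < p2"
    and "l \<le> p1 - p2 - 1"
    and "l = \<nu> * p2 + l'" and "l' < p2"
    and "real l / real (p1 - p2) \<le> c" and "c < (real l + 1) / real (p1 - p2)"
  shows "\<exists>k :: nat \<Rightarrow> nat.
           map (S c p1 p2) [0..<p1 + p2] =
             concat (map (\<lambda>i. replicate (k i) 1 @ [2]) [1..<p2 + 1]) @ replicate (k (p2 + 1)) 1
         \<and> k 1 = \<nu> + 1
         \<and> (\<forall>i\<in>{2..p2}. k i = (if \<exists>j\<in>{1..b}.
                 int i = \<lceil>(real (j * p2) - real l') / real b\<rceil> + 1 then a + 1 else a))
         \<and> k (p2 + 1) = p1 - (\<Sum>i=1..p2. k i)"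
proof -
  let ?D = "party1_seats_before p1 p2 l"
  define k where "k i = (if i \<le> p2 then ?D i else p1) - ?D (i - 1)" for i
  have p2: "0 < p2" "p2 < p1" "l < p1" using assms(2,3,8) by linarith+
  then interpret threshold_allocation c p1 p2 ?D
    using assms(11,12) by (intro threshold_allocation_party1_seats_before)
  have "map (S c p1 p2) [0..<p1 + p2] =
      concat (map (\<lambda>i. replicate (k i) 1 @ [2]) [1..<p2 + 1]) @ replicate (k (p2 + 1)) 1"
    using map_S_prefix[OF party1_seats_before_bracket[OF p2(1,3)], of k] by (simp add: k_def)
  moreover have "k 1 = \<nu> + 1" using assms(9,10) by (simp add: k_def)
  moreover have "\<forall>i\<in>{2..p2}. k i = (if \<exists>j\<in>{1..b}.
      int i = \<lceil>(real (j * p2) - real l') / real b\<rceil> + 1 then a + 1 else a)"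
    using party1_seats_before_step[OF assms(4,6,7,9,10)] by (simp add: k_def)
  moreover have "k (p2 + 1) = p1 - (\<Sum>i=1..p2. k i)"
  proof -
    have "(\<Sum>i=1..p2. k i) = ?D p2" using sum_block_lengths[of p2] by (simp add: k_def)
    then show ?thesis by (simp add: k_def)
  qed
  ultimately show ?thesis by blast
qed

end
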